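(* Let $n>1$ and let $t_1<\cdots<t_{n+1}$ be real nodes. Let $L=(\prod_{k=1}^{j-1}(t_i-t_k))_{1\le i,j\le n+1}$ be the collocation matrix of the Newton basis at these nodes and let $BD(L)=(b_{i,j})_{1\le i,j\le n+1}$ be the matrix with $b_{i,j}=0$ for $i<j$, $b_{i,i}=\prod_{k=1}^{i-1}(t_i-t_k)$, and $b_{i,j}=\prod_{k=1}^{j-1}\frac{t_i-t_{i-k}}{t_{i-1}-t_{i-k-1}}$ for $i>j$. Suppose the entries are computed in floating-point arithmetic with unit roundoff $u$, with $(4n-5)u<1$, by the following algorithms: Algorithm 1 (for $i>j$): for $i=2,\dots,n+1$, set $m_{i,1}:=1$ and for $j=2,\dots,i-1$ set $M:=\frac{t_i-t_{i-j+1}}{t_{i-1}-t_{i-j}}$ and $m_{i,j}:=m_{i,j-1}\cdot M$; then $b_{i,j}=m_{i,j}$. Algorithm 2 (for $i=j$): set $p_1:=1$; for $i=2,\dots,n+1$ set $p_i:=1$ and for $k=1,\dots,i-1$ set $p_i:=p_i\cdot(t_i-t_{i-k})$; then $b_{i,i}=p_i$. Let $\mathrm{fl}(b_{i,j})$ denote the computed values. Then $$\left|\frac{b_{i,j}-\mathrm{fl}(b_{i,j})}{b_{i,j}}\right|\le\gamma_{4n-5},\qquad 1\le j\le i\le n+1.$$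
   Context: Floating-point model: for elementary operations $\mathrm{op}\in\{+,-,\times,/\}$, $\mathrm{fl}(a\,\mathrm{op}\,b)=(a\,\mathrm{op}\,b)(1+\delta)^{\pm1}$ with $|\delta|\le u$. For $k\in\mathbb N$ with $ku<1$, $\gamma_k:=\frac{ku}{1-ku}$. *)

theory Defs
  imports Complex_Main
begin

definition gamma :: "real \<Rightarrow> real \<Rightarrow> real" where
  "gamma k u = k * u / (1 - k * u)"

definition fp_op :: "real \<Rightarrow> (real \<Rightarrow> real \<Rightarrow> real) \<Rightarrow> (real \<Rightarrow> real \<Rightarrow> real) \<Rightarrow> bool" where
  "fp_op u op fop \<longleftrightarrow> (\<forall>a b. \<exists>\<delta>. \<bar>\<delta>\<bar> \<le> u \<and>
      (fop a b = op a b * (1 + \<delta>) \<or> fop a b = op a b / (1 + \<delta>)))"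

text \<open>Exact entries of BD(L) (1-based indices, nodes t 1, ..., t (n+1)).\<close>
definition bd :: "(nat \<Rightarrow> real) \<Rightarrow> nat \<Rightarrow> nat \<Rightarrow> real" where
  "bd t i j = (if i < j then 0
     else if i = j then (\<Prod>k = 1..i-1. t i - t k)
     else (\<Prod>k = 1..j-1. (t i - t (i - k)) / (t (i - 1) - t (i - k - 1))))"

fun alg1 :: "(real \<Rightarrow> real \<Rightarrow> real) \<Rightarrow> (real \<Rightarrow> real \<Rightarrow> real) \<Rightarrow> (real \<Rightarrow> real \<Rightarrow> real)
    \<Rightarrow> (nat \<Rightarrow> real) \<Rightarrow> nat \<Rightarrow> nat \<Rightarrow> real" where
  "alg1 fsub fmul fdiv t i 0 = 1"
| "alg1 fsub fmul fdiv t i (Suc 0) = 1"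
| "alg1 fsub fmul fdiv t i (Suc (Suc j)) =
     fmul (alg1 fsub fmul fdiv t i (Suc j))
          (fdiv (fsub (t i) (t (i - Suc j))) (fsub (t (i - 1)) (t (i - Suc j - 1))))"

text \<open>Algorithm 2: value of p_i after k steps of the inner loop:
  p := 1; for k: p := fl(p * fl(t i - t (i-k))).\<close>
fun alg2 :: "(real \<Rightarrow> real \<Rightarrow> real) \<Rightarrow> (real \<Rightarrow> real \<Rightarrow> real)
    \<Rightarrow> (nat \<Rightarrow> real) \<Rightarrow> nat \<Rightarrow> nat \<Rightarrow> real" where
  "alg2 fsub fmul t i 0 = 1"
| "alg2 fsub fmul t i (Suc k) = fmul (alg2 fsub fmul t i k) (fsub (t i) (t (i - Suc k)))"

definition fl_bd :: "(real \<Rightarrow> real \<Rightarrow> real) \<Rightarrow> (real \<Rightarrow> real \<Rightarrow> real) \<Rightarrow> (real \<Rightarrow> real \<Rightarrow> real)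
    \<Rightarrow> (nat \<Rightarrow> real) \<Rightarrow> nat \<Rightarrow> nat \<Rightarrow> real" where
  "fl_bd fsub fmul fdiv t i j = (if i = j then alg2 fsub fmul t i (i - 1) else alg1 fsub fmul fdiv t i j)"

end

theory Submission
  imports Defs
begin

text \<open>Every floating-point operation multiplies its exact result by a factor \<open>(1 + \<delta>)\<^sup>\<plusminus>\<^sup>1\<close>
  with \<open>|\<delta>| \<le> u\<close>, and such factors simply multiply up along a computation. A computed
  diagonal entry \<open>p\<^sub>i\<close> carries \<open>2i - 3 \<le> 2n - 1\<close> of them (one subtraction and one
  multiplication per step, the first multiplication being by 1 and hence exact); a computed
  \<open>m\<^sub>i\<^sub>,\<^sub>j\<close> carries \<open>4j - 5 \<le> 4n - 5\<close> (three per quotient of differences, one per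
  multiplication). A product of \<open>m\<close> factors lies in \<open>[(1 - u)\<^sup>m, (1 - u)\<^sup>-\<^sup>m]\<close>, and
  Bernoulli's inequality \<open>(1 - u)\<^sup>m \<ge> 1 - m u\<close> turns this into the relative error \<open>\<gamma>\<^sub>m\<close>.\<close>

definition rounding_factor :: "real \<Rightarrow> nat \<Rightarrow> real \<Rightarrow> bool" where
  "rounding_factor u m x \<longleftrightarrow> (1 - u) ^ m \<le> x \<and> x \<le> 1 / (1 - u) ^ m"

lemma rounding_factor_pos: "u < 1 \<Longrightarrow> rounding_factor u m x \<Longrightarrow> 0 < x"
  unfolding rounding_factor_def by (smt (verit) zero_less_power)

lemma rounding_factor_zero: "rounding_factor u 0 1"
  unfolding rounding_factor_def by simp

lemma rounding_factor_mult:
  assumes u: "u < 1" and x: "rounding_factor u a x" and y: "rounding_factor u b y"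
  shows "rounding_factor u (a + b) (x * y)"
proof -
  have pos: "0 < (1 - u) ^ a" "0 < (1 - u) ^ b" using u by simp_all
  have "(1 - u) ^ a * (1 - u) ^ b \<le> x * y"
    using x y pos unfolding rounding_factor_def by (intro mult_mono) auto
  moreover have "x * y \<le> (1 / (1 - u) ^ a) * (1 / (1 - u) ^ b)"
    using x y pos rounding_factor_pos[OF u x] unfolding rounding_factor_def
    by (intro mult_mono) auto
  ultimately show ?thesis unfolding rounding_factor_def by (simp add: power_add)
qed

lemma rounding_factor_inverse:
  assumes u: "u < 1" and x: "rounding_factor u m x"
  shows "rounding_factor u m (1 / x)"
  using x rounding_factor_pos[OF u x] u unfolding rounding_factor_def
  by (simp add: field_simps)

lemma rounding_factor_mono:
  assumes u: "0 \<le> u" "u < 1" and x: "rounding_factor u m x" and le: "m \<le> m'"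
  shows "rounding_factor u m' x"
proof -
  have le_pow: "(1 - u) ^ m' \<le> (1 - u) ^ m" using u le by (intro power_decreasing) auto
  then have "1 / (1 - u) ^ m \<le> 1 / (1 - u) ^ m'"
    using u by (intro divide_left_mono) auto
  with le_pow x show ?thesis unfolding rounding_factor_def by auto
qed

lemma rounding_factor_one_plus:
  assumes "\<bar>\<delta>\<bar> \<le> u" "u < 1"
  shows "rounding_factor u 1 (1 + \<delta>)"
proof -
  have "(1 + \<delta>) * (1 - u) \<le> (1 + u) * (1 - u)"
    using assms by (intro mult_right_mono) auto
  also have "\<dots> \<le> 1" by (simp add: algebra_simps)
  finally have "1 + \<delta> \<le> 1 / (1 - u)" using assms by (simp add: field_simps)
  then show ?thesis using assms unfolding rounding_factor_def by simp
qed

lemma fp_op_nonneg: "fp_op u op fop \<Longrightarrow> 0 \<le> u"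
  unfolding fp_op_def by force

lemma fp_op_rounding_factor:
  assumes "fp_op u op fop" "u < 1"
  obtains x where "rounding_factor u 1 x" "fop a b = op a b * x"
proof -
  obtain \<delta> where \<delta>: "\<bar>\<delta>\<bar> \<le> u" "fop a b = op a b * (1 + \<delta>) \<or> fop a b = op a b / (1 + \<delta>)"
    using assms(1) unfolding fp_op_def by blast
  have factor: "rounding_factor u 1 (1 + \<delta>)"
    using \<delta>(1) assms(2) by (rule rounding_factor_one_plus)
  show thesis
  proof (cases "fop a b = op a b * (1 + \<delta>)")
    case True
    with factor that show thesis by blast
  next
    case False
    then have "fop a b = op a b * (1 / (1 + \<delta>))" using \<delta>(2) by simp
    with rounding_factor_inverse[OF assms(2) factor] that show thesis by blast
  qed
qed

lemma rounding_factor_rel_error: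
  assumes u: "0 \<le> u" "u < 1" and mu: "real m * u < 1"
    and x: "rounding_factor u m x" and fl: "y' = y * x"
  shows "\<bar>(y - y') / y\<bar> \<le> gamma (real m) u"
proof -
  have bernoulli: "1 - real m * u \<le> (1 - u) ^ m"
    using Bernoulli_inequality[of "-u" m] u by simp
  have pos: "0 < 1 - real m * u" using mu by simp
  have "1 - x \<le> real m * u" using x bernoulli unfolding rounding_factor_def by simp
  also have "\<dots> \<le> real m * u / (1 - real m * u)"
    using pos u by (simp add: field_simps mult_le_cancel_left1)
  finally have lower: "1 - x \<le> gamma (real m) u" unfolding gamma_def .
  have "x \<le> 1 / (1 - u) ^ m" using x unfolding rounding_factor_def by simp
  also have "\<dots> \<le> 1 / (1 - real m * u)"
    using bernoulli pos by (intro divide_left_mono) auto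
  finally have upper: "x - 1 \<le> gamma (real m) u"
    using pos unfolding gamma_def by (simp add: field_simps)
  show ?thesis
  proof (cases "y = 0")
    case True
    then show ?thesis using lower upper by simp
  next
    case False
    then have "(y - y') / y = 1 - x" using fl by (simp add: field_simps)
    then show ?thesis using lower upper by simp
  qed
qed

lemma fp_mult_rounding_factors:
  assumes u: "u < 1" and fmul: "fp_op u (*) fmul"
    and x: "rounding_factor u a x" and y: "rounding_factor u b y"
  obtains z where "rounding_factor u (a + b + 1) z" "fmul (v * x) (w * y) = v * w * z"
proof -
  obtain r where r: "rounding_factor u 1 r" "fmul (v * x) (w * y) = v * x * (w * y) * r"
    using fp_op_rounding_factor[OF fmul u] by blast
  have "rounding_factor u (a + b + 1) (x * y * r)"
    using rounding_factor_mult[OF u rounding_factor_mult[OF u x y] r(1)] .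
  moreover have "fmul (v * x) (w * y) = v * w * (x * y * r)" using r(2) by simp
  ultimately show thesis using that by blast
qed

lemma fp_quotient_of_differences:
  assumes u: "u < 1" and fsub: "fp_op u (-) fsub" and fdiv: "fp_op u (/) fdiv"
  obtains z where "rounding_factor u 3 z" "fdiv (fsub a b) (fsub c d) = (a - b) / (c - d) * z"
proof -
  obtain x where x: "rounding_factor u 1 x" "fsub a b = (a - b) * x"
    using fp_op_rounding_factor[OF fsub u] by blast
  obtain y where y: "rounding_factor u 1 y" "fsub c d = (c - d) * y"
    using fp_op_rounding_factor[OF fsub u] by blast
  obtain r where r: "rounding_factor u 1 r" "fdiv ((a - b) * x) ((c - d) * y) = (a - b) * x / ((c - d) * y) * r"
    using fp_op_rounding_factor[OF fdiv u] by blast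
  have "rounding_factor u (1 + 1 + 1) (x * (1 / y) * r)"
    using rounding_factor_mult[OF u rounding_factor_mult[OF u x(1) rounding_factor_inverse[OF u y(1)]] r(1)] .
  moreover have "fdiv (fsub a b) (fsub c d) = (a - b) / (c - d) * (x * (1 / y) * r)"
    using x(2) y(2) r(2) rounding_factor_pos[OF u y(1)] by simp
  moreover have "(1::nat) + 1 + 1 = 3" by simp
  ultimately show thesis using that by metis
qed

lemma alg2_rounding_factor:
  assumes u: "u < 1" and fsub: "fp_op u (-) fsub" and fmul: "fp_op u (*) fmul"
    and mult_one: "\<And>x. fmul 1 x = x"
  shows "\<exists>x. rounding_factor u (2 * k - 1) x \<and> alg2 fsub fmul t i k = (\<Prod>l = 1..k. t i - t (i - l)) * x"
proof (induction k)
  case 0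
  show ?case using rounding_factor_zero by auto
next
  case (Suc k)
  obtain y where y: "rounding_factor u 1 y" "fsub (t i) (t (i - Suc k)) = (t i - t (i - Suc k)) * y"
    using fp_op_rounding_factor[OF fsub u] by blast
  show ?case
  proof (cases "k = 0")
    case True
    then show ?thesis using y mult_one by auto
  next
    case False
    obtain x where x: "rounding_factor u (2 * k - 1) x"
      "alg2 fsub fmul t i k = (\<Prod>l = 1..k. t i - t (i - l)) * x"
      using Suc.IH by blast
    obtain z where "rounding_factor u (2 * k - 1 + 1 + 1) z"
      "fmul ((\<Prod>l = 1..k. t i - t (i - l)) * x) ((t i - t (i - Suc k)) * y)
         = (\<Prod>l = 1..k. t i - t (i - l)) * (t i - t (i - Suc k)) * z"
      using fp_mult_rounding_factors[OF u fmul x(1) y(1)] by blast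
    moreover have "2 * k - 1 + 1 + 1 = 2 * Suc k - 1" using False by simp
    ultimately show ?thesis using x(2) y(2) by (auto simp: prod.nat_ivl_Suc')
  qed
qed

lemma alg1_rounding_factor:
  assumes u: "u < 1" and fsub: "fp_op u (-) fsub" and fmul: "fp_op u (*) fmul"
    and fdiv: "fp_op u (/) fdiv" and mult_one: "\<And>x. fmul 1 x = x"
  shows "\<exists>x. rounding_factor u (4 * j - 1) x \<and> alg1 fsub fmul fdiv t i (Suc j)
           = (\<Prod>k = 1..j. (t i - t (i - k)) / (t (i - 1) - t (i - k - 1))) * x"
proof (induction j)
  case 0
  show ?case using rounding_factor_zero by auto
next
  case (Suc j)
  obtain y where y: "rounding_factor u 3 y"
    "fdiv (fsub (t i) (t (i - Suc j))) (fsub (t (i - 1)) (t (i - Suc j - 1)))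
       = (t i - t (i - Suc j)) / (t (i - 1) - t (i - Suc j - 1)) * y"
    using fp_quotient_of_differences[OF u fsub fdiv] by blast
  show ?case
  proof (cases "j = 0")
    case True
    then show ?thesis using y mult_one by auto
  next
    case False
    obtain x where x: "rounding_factor u (4 * j - 1) x"
      "alg1 fsub fmul fdiv t i (Suc j) = (\<Prod>k = 1..j. (t i - t (i - k)) / (t (i - 1) - t (i - k - 1))) * x"
      using Suc.IH by blast
    obtain z where "rounding_factor u (4 * j - 1 + 3 + 1) z"
      "fmul ((\<Prod>k = 1..j. (t i - t (i - k)) / (t (i - 1) - t (i - k - 1))) * x)
            ((t i - t (i - Suc j)) / (t (i - 1) - t (i - Suc j - 1)) * y)
         = (\<Prod>k = 1..j. (t i - t (i - k)) / (t (i - 1) - t (i - k - 1)))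
           * ((t i - t (i - Suc j)) / (t (i - 1) - t (i - Suc j - 1))) * z"
      using fp_mult_rounding_factors[OF u fmul x(1) y(1)] by blast
    moreover have "4 * j - 1 + 3 + 1 = 4 * Suc j - 1" using False by simp
    ultimately show ?thesis using x(2) y(2) by (auto simp: prod.nat_ivl_Suc')
  qed
qed

lemma fl_bd_rounding_factor:
  assumes n: "n > 1" and ij: "1 \<le> j" "j \<le> i" "i \<le> n + 1"
    and u: "0 \<le> u" "u < 1"
    and fsub: "fp_op u (-) fsub" and fmul: "fp_op u (*) fmul" and fdiv: "fp_op u (/) fdiv"
    and mult_one: "\<And>x. fmul 1 x = x"
  shows "\<exists>x. rounding_factor u (4 * n - 5) x \<and> fl_bd fsub fmul fdiv t i j = bd t i j * x"
proof (cases "i = j")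
  case True
  obtain x where x: "rounding_factor u (2 * (i - 1) - 1) x"
    "alg2 fsub fmul t i (i - 1) = (\<Prod>l = 1..i - 1. t i - t (i - l)) * x"
    using alg2_rounding_factor[OF u(2) fsub fmul mult_one] by blast
  have "(\<Prod>l = 1..i - 1. t i - t (i - l)) = (\<Prod>k = 1..i - 1. t i - t k)"
    by (rule prod.reindex_bij_witness[where i="\<lambda>k. i - k" and j="\<lambda>k. i - k"]) auto
  then have "fl_bd fsub fmul fdiv t i j = bd t i j * x"
    using x(2) True unfolding fl_bd_def bd_def by simp
  moreover have "2 * (i - 1) - 1 \<le> 4 * n - 5" using ij n by arith
  ultimately show ?thesis using rounding_factor_mono[OF u x(1)] by blast
next
  case False
  obtain j' where j': "j = Suc j'" using ij by (cases j) auto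
  obtain x where x: "rounding_factor u (4 * j' - 1) x" "alg1 fsub fmul fdiv t i (Suc j')
      = (\<Prod>k = 1..j'. (t i - t (i - k)) / (t (i - 1) - t (i - k - 1))) * x"
    using alg1_rounding_factor[OF u(2) fsub fmul fdiv mult_one] by blast
  have "fl_bd fsub fmul fdiv t i j = bd t i j * x"
    using x(2) False ij j' unfolding fl_bd_def bd_def by simp
  moreover have "4 * j' - 1 \<le> 4 * n - 5" using ij False j' by arith
  ultimately show ?thesis using rounding_factor_mono[OF u x(1)] by blast
qed

theorem theorem3:
  fixes n :: nat and t :: "nat \<Rightarrow> real" and u :: real
    and fsub fmul fdiv :: "real \<Rightarrow> real \<Rightarrow> real"
  assumes "n > 1"
    and "strict_mono_on {1..n+1} t"
    and "(4 * real n - 5) * u < 1"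
    and "fp_op u (-) fsub" and "fp_op u (*) fmul" and "fp_op u (/) fdiv"
    and "\<And>x. fmul 1 x = x"
  shows "\<forall>i j. 1 \<le> j \<and> j \<le> i \<and> i \<le> n + 1 \<longrightarrow>
           \<bar>(bd t i j - fl_bd fsub fmul fdiv t i j) / bd t i j\<bar> \<le> gamma (4 * real n - 5) u"
proof (intro allI impI)
  fix i j assume ij: "1 \<le> j \<and> j \<le> i \<and> i \<le> n + 1"
  have m: "real (4 * n - 5) = 4 * real n - 5" using assms(1) by (simp add: of_nat_diff)
  have u0: "0 \<le> u" using fp_op_nonneg[OF assms(4)] .
  have mu: "real (4 * n - 5) * u < 1" using m assms(3) by simp
  have "1 \<le> 4 * n - 5" using assms(1) by arith
  then have "1 * u \<le> real (4 * n - 5) * u" using u0 by (intro mult_right_mono) simp_all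
  then have u1: "u < 1" using mu by simp
  obtain x where "rounding_factor u (4 * n - 5) x" "fl_bd fsub fmul fdiv t i j = bd t i j * x"
    using fl_bd_rounding_factor[OF assms(1) _ _ _ u0 u1 assms(4-7)] ij by blast
  from rounding_factor_rel_error[OF u0 u1 mu this] m
  show "\<bar>(bd t i j - fl_bd fsub fmul fdiv t i j) / bd t i j\<bar> \<le> gamma (4 * real n - 5) u"
    by simp
qed

end
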